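(* Let $N\ge 2$, let $O_N$ be a Haar distributed random matrix on the orthogonal group $O(N)$, let $n$ be even, and let $M_1,\dots,M_n\in M_N(\mathbb{C})$ be deterministic. Put $X_i=O_NM_iO_N^t$ for $i$ odd and $X_i=M_i$ for $i$ even. Then \begin{align*} (N-1)\,\mathbb{E}\big[\mathrm{Tr}(X_1X_2\cdots X_n)\big] =&-\sum_{\substack{1\le k\le n-1\\ k\text{ odd}}}\mathbb{E}\big[\mathrm{Tr}\big(X_1\cdots X_k\,(X_{k+1}\cdots X_n)^t\big)\big]\\ &+\sum_{\substack{1\le k\le n-1\\ k\text{ odd}}}\mathbb{E}\big[\mathrm{Tr}(X_1\cdots X_k)\,\mathrm{Tr}(X_{k+1}\cdots X_n)\big]\\ &+\sum_{\substack{3\le k\le n-1\\ k\text{ odd}}}\mathbb{E}\big[\mathrm{Tr}\big(X_1\cdots X_{k-1}\,(X_k\cdots X_n)^t\big)\big]\\ &-\sum_{\substack{3\le k\le n-1\\ k\text{ odd}}}\mathbb{E}\big[\mathrm{Tr}(X_1\cdots X_{k-1})\,\mathrm{Tr}(X_k\cdots X_n)\big]. \end{align*}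
   Context: $\mathrm{Tr}$ denotes the (unnormalized) trace on $M_N(\mathbb{C})$ and $A^t$ the transpose of a matrix $A$. *)

theory Defs
  imports "HOL-Analysis.Analysis" "HOL-Probability.Probability"
begin

text \<open>Haar probability measure on the orthogonal group O(N), with N = CARD('n):
  a Borel probability measure on real N x N matrices, concentrated on O(N), and
  invariant under left multiplication by every orthogonal matrix
  (on a compact group this characterises the Haar measure uniquely).\<close>
definition haar_orthogonal :: "(real^'n^'n) measure \<Rightarrow> bool" where
  "haar_orthogonal \<mu> \<longleftrightarrow>
     prob_space \<mu> \<and> sets \<mu> = sets borel \<and>
     (AE Q in \<mu>. orthogonal_matrix Q) \<and>
     (\<forall>U. orthogonal_matrix U \<longrightarrow> distr \<mu> borel (\<lambda>Q. U ** Q) = \<mu>)"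

definition cmat :: "real^'n^'n \<Rightarrow> complex^'n^'n" where
  "cmat Q = (\<chi> i j. complex_of_real (Q $ i $ j))"

text \<open>Ordered matrix product X a X (a+1) ... X b (identity if b < a).\<close>
definition mprod :: "(nat \<Rightarrow> complex^'n^'n) \<Rightarrow> nat \<Rightarrow> nat \<Rightarrow> complex^'n^'n" where
  "mprod X a b = foldr (\<lambda>i acc. X i ** acc) [a..<Suc b] (mat 1)"

definition Xmat :: "real^'n^'n \<Rightarrow> (nat \<Rightarrow> complex^'n^'n) \<Rightarrow> nat \<Rightarrow> complex^'n^'n" where
  "Xmat Q M i = (if odd i then cmat Q ** M i ** transpose (cmat Q) else M i)"

end

theory Submission
  imports Defs
begin

(* Schwinger-Dyson argument.  For a skew matrix E with E^3 = -E (such as E_ab - E_ba), the Haar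
   measure is invariant under left multiplication by the rotations exp(sE); differentiating
   E[X_1 ... X_n] at s = 0 gives E[sum over odd i of X_1 ... X_(i-1) [E, X_i] X_(i+1) ... X_n] = 0.
   Take the (a,b) entry for E = E_ab - E_ba and sum over a, b: since
   sum_(a,b) (P E_ab R)_ab = Tr P Tr R and sum_(a,b) (P E_ba R)_ab = Tr (P R^t), the i-th term
   becomes d(i-1) - d(i), where d(j) = Tr(X_1 ... X_j) Tr(X_(j+1) ... X_n)
   - Tr(X_1 ... X_j (X_(j+1) ... X_n)^t), and d(0) = (N - 1) Tr(X_1 ... X_n).
   The derivative is taken along a rational parametrisation of the rotations, and limit and
   integral are interchanged by dominated convergence on the compact group O(N). *)

lemma matrix_add_rdistrib: "(B + C) ** (A::'a::semiring_1^_^_) = B ** A + C ** A"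
  by (vector matrix_matrix_mult_def sum.distrib[symmetric] field_simps)

lemma matrix_diff_ldistrib: "(A::'a::ring_1^_^_) ** (B - C) = A ** B - A ** C"
  by (vector matrix_matrix_mult_def sum_subtractf[symmetric] field_simps)

lemma matrix_diff_rdistrib: "(B - C) ** (A::'a::ring_1^_^_) = B ** A - C ** A"
  by (vector matrix_matrix_mult_def sum_subtractf[symmetric] field_simps)

lemma matrix_neg_left: "(- B) ** (A::'a::ring_1^_^_) = - (B ** A)"
  by (vector matrix_matrix_mult_def sum_negf[symmetric])

lemma matrix_neg_right: "(A::'a::ring_1^_^_) ** (- B) = - (A ** B)"
  by (vector matrix_matrix_mult_def sum_negf[symmetric])

lemma matrix_sum_rdistrib: "sum f S ** (A::'a::semiring_1^_^_) = (\<Sum>i\<in>S. f i ** A)"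
  by (induction S rule: infinite_finite_induct) (auto simp: matrix_add_rdistrib)

lemma transpose_add: "transpose (A + B) = transpose A + transpose B"
  by (vector transpose_def)

lemma transpose_diff: "transpose (A - B) = transpose A - (transpose B :: 'a::ab_group_add^_^_)"
  by (vector transpose_def)

lemma trace_transpose: "trace (transpose A) = trace (A::'a::semiring_1^'n^'n)"
  by (simp add: trace_def transpose_def)

lemma cmat_mult: "cmat (A ** B) = cmat A ** cmat B"
  by (simp add: cmat_def matrix_matrix_mult_def vec_eq_iff)

lemma cmat_add: "cmat (A + B) = cmat A + cmat B"
  by (simp add: cmat_def vec_eq_iff)

lemma cmat_diff: "cmat (A - B) = cmat A - cmat B"
  by (simp add: cmat_def vec_eq_iff)

lemma cmat_scaleR: "cmat (c *\<^sub>R A) = c *\<^sub>R cmat A"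
  by (simp add: cmat_def vec_eq_iff) (simp add: scaleR_conv_of_real)

lemma cmat_mat: "cmat (mat x) = mat (complex_of_real x)"
  by (simp add: cmat_def vec_eq_iff mat_def)

lemma cmat_uminus: "cmat (- A) = - cmat A"
  by (simp add: cmat_def vec_eq_iff)

lemma cmat_transpose: "cmat (transpose A) = transpose (cmat A)"
  by (simp add: cmat_def vec_eq_iff transpose_def)

lemma continuous_on_matrix_mult [continuous_intros]:
  fixes f :: "_ \<Rightarrow> 'a::{real_normed_algebra,semiring_1}^'m^'n"
  assumes "continuous_on S f" "continuous_on S g"
  shows "continuous_on S (\<lambda>x. f x ** g x)"
  unfolding matrix_matrix_mult_def by (intro continuous_intros assms)

lemma continuous_on_transpose [continuous_intros]:
  "continuous_on S f \<Longrightarrow> continuous_on S (\<lambda>x. transpose (f x))"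
  unfolding transpose_def by (intro continuous_intros)

lemma continuous_on_trace [continuous_intros]:
  fixes f :: "_ \<Rightarrow> 'a::{real_normed_algebra,semiring_1}^'n^'n"
  shows "continuous_on S f \<Longrightarrow> continuous_on S (\<lambda>x. trace (f x))"
  unfolding trace_def by (intro continuous_intros)

lemma continuous_on_cmat [continuous_intros]:
  "continuous_on S f \<Longrightarrow> continuous_on S (\<lambda>x. cmat (f x))"
  unfolding cmat_def by (intro continuous_intros)

lemma continuous_on_Xmat [continuous_intros]:
  "continuous_on S f \<Longrightarrow> continuous_on S (\<lambda>x. Xmat (f x) M i)"
  unfolding Xmat_def by (cases "odd i") (auto intro!: continuous_intros)

lemma continuous_on_mprod [continuous_intros]:
  assumes "\<And>i. continuous_on S (\<lambda>x. X x i)"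
  shows "continuous_on S (\<lambda>x. mprod (X x) a b)"
proof -
  have "continuous_on S (\<lambda>x. foldr (\<lambda>i acc. X x i ** acc) xs (mat 1))" for xs
    by (induction xs) (auto intro!: continuous_intros assms)
  then show ?thesis
    unfolding mprod_def .
qed

lemma mprod_eq_mat_1: "b < a \<Longrightarrow> mprod X a b = mat 1"
  by (simp add: mprod_def)

lemma mprod_Cons: "a \<le> b \<Longrightarrow> mprod X a b = X a ** mprod X (Suc a) b"
  by (simp add: mprod_def upt_conv_Cons del: upt_Suc)

lemma mprod_snoc:
  assumes "a \<le> Suc b"
  shows "mprod X a (Suc b) = mprod X a b ** X (Suc b)"
proof -
  have foldr_mult: "foldr (\<lambda>i acc. X i ** acc) xs B = foldr (\<lambda>i acc. X i ** acc) xs (mat 1) ** B"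
    for xs B
    by (induction xs) (simp_all add: matrix_mul_assoc)
  have "[a..<Suc (Suc b)] = [a..<Suc b] @ [Suc b]"
    using assms by simp
  then show ?thesis
    by (simp add: mprod_def foldr_mult[of "[a..<Suc b]" "X (Suc b)"] del: upt_Suc)
qed

lemma mprod_telescope:
  "mprod X 1 n - mprod Y 1 n
    = (\<Sum>i=1..n. mprod X 1 (i - 1) ** (X i - Y i) ** mprod Y (Suc i) n)"
proof (induction n)
  case 0
  then show ?case by (simp add: mprod_eq_mat_1)
next
  case (Suc n)
  have "mprod X 1 (Suc n) - mprod Y 1 (Suc n)
      = mprod X 1 n ** (X (Suc n) - Y (Suc n)) + (mprod X 1 n - mprod Y 1 n) ** Y (Suc n)"
    by (simp add: mprod_snoc matrix_diff_ldistrib matrix_diff_rdistrib)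
  also have "(mprod X 1 n - mprod Y 1 n) ** Y (Suc n)
      = (\<Sum>i=1..n. mprod X 1 (i - 1) ** (X i - Y i) ** mprod Y (Suc i) (Suc n))"
    unfolding Suc.IH matrix_sum_rdistrib by (intro sum.cong refl) (simp add: mprod_snoc matrix_mul_assoc)
  finally show ?case
    by (simp add: mprod_eq_mat_1 add.commute)
qed

lemma haar_orthogonalD:
  assumes "haar_orthogonal \<mu>"
  shows "prob_space \<mu>" and "sets \<mu> = sets borel" and "AE Q in \<mu>. orthogonal_matrix Q"
    and "orthogonal_matrix U \<Longrightarrow> distr \<mu> borel (\<lambda>Q. U ** Q) = \<mu>"
  using assms by (auto simp: haar_orthogonal_def)

lemma norm_orthogonal_matrix:
  assumes "orthogonal_matrix (Q::real^'n^'n)"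
  shows "norm Q = sqrt CARD('n)"
proof -
  have "norm (Q $ i) = 1" for i
    using assms orthogonal_matrix_orthonormal_rows[of Q] by (simp add: row_def)
  then show ?thesis
    by (simp add: norm_vec_def L2_set_def)
qed

lemma compact_orthogonal_matrices: "compact {Q::real^'n^'n. orthogonal_matrix Q}"
  unfolding compact_eq_bounded_closed
proof
  show "bounded {Q::real^'n^'n. orthogonal_matrix Q}"
    by (rule boundedI[of _ "sqrt CARD('n)"]) (simp add: norm_orthogonal_matrix)
  show "closed {Q::real^'n^'n. orthogonal_matrix Q}"
    unfolding orthogonal_matrix_def Collect_conj_eq
    by (intro closed_Int closed_Collect_eq continuous_intros)
qed

lemma measurable_haar_continuous:
  assumes "haar_orthogonal \<mu>" and "continuous_on UNIV f"
  shows "f \<in> borel_measurable \<mu>"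
  using borel_measurable_continuous_onI[OF assms(2)]
  by (simp add: measurable_cong_sets[OF haar_orthogonalD(2)[OF assms(1)] refl])

lemma integrable_haar_continuous:
  fixes f :: "real^'n^'n \<Rightarrow> 'b::{banach,second_countable_topology}"
  assumes haar: "haar_orthogonal \<mu>" and f: "continuous_on UNIV f"
  shows "integrable \<mu> f"
proof -
  interpret prob_space \<mu>
    using haar by (rule haar_orthogonalD)
  have "bounded (f ` {Q. orthogonal_matrix Q})"
    by (intro compact_imp_bounded compact_continuous_image continuous_on_subset[OF f]
        compact_orthogonal_matrices) auto
  then obtain B where B: "\<And>Q. orthogonal_matrix Q \<Longrightarrow> norm (f Q) \<le> B"
    unfolding bounded_iff by blast
  have "AE Q in \<mu>. norm (f Q) \<le> B"
    using haar_orthogonalD(3)[OF haar] by eventually_elim (rule B)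
  then show ?thesis
    by (rule integrable_const_bound) (rule measurable_haar_continuous[OF haar f])
qed

lemma haar_integral_left_mult:
  fixes f :: "real^'n^'n \<Rightarrow> 'b::{banach,second_countable_topology}"
  assumes haar: "haar_orthogonal \<mu>" and f: "continuous_on UNIV f" and U: "orthogonal_matrix U"
  shows "(\<integral>Q. f (U ** Q) \<partial>\<mu>) = (\<integral>Q. f Q \<partial>\<mu>)"
proof -
  have "(\<lambda>Q. U ** Q) \<in> borel_measurable \<mu>"
    by (rule measurable_haar_continuous[OF haar]) (intro continuous_intros)
  then have "(\<integral>Q. f Q \<partial>distr \<mu> borel (\<lambda>Q. U ** Q)) = (\<integral>Q. f (U ** Q) \<partial>\<mu>)"
    by (rule integral_distr) (rule borel_measurable_continuous_onI[OF f])
  then show ?thesis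
    by (simp add: haar_orthogonalD(4)[OF haar U])
qed

lemma tendsto_haar_integral_param:
  fixes H :: "real \<Rightarrow> real^'n^'n \<Rightarrow> 'b::{banach,second_countable_topology}"
  assumes haar: "haar_orthogonal \<mu>" and H: "continuous_on UNIV (\<lambda>p. H (fst p) (snd p))"
    and s: "s \<longlonglongrightarrow> t"
  shows "(\<lambda>i. \<integral>Q. H (s i) Q \<partial>\<mu>) \<longlonglongrightarrow> (\<integral>Q. H t Q \<partial>\<mu>)"
proof -
  interpret prob_space \<mu>
    using haar by (rule haar_orthogonalD)
  have H_at: "continuous_on UNIV (H r)" for r
    using continuous_on_compose2[OF H continuous_on_Pair[OF continuous_on_const continuous_on_id]]
    by simp
  let ?K = "insert t (range s) \<times> {Q. orthogonal_matrix Q}"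
  have "bounded ((\<lambda>p. H (fst p) (snd p)) ` ?K)"
    by (intro compact_imp_bounded compact_continuous_image continuous_on_subset[OF H]
        compact_Times compact_sequence_with_limit s compact_orthogonal_matrices) auto
  then obtain B
    where B: "\<And>r Q. r \<in> insert t (range s) \<Longrightarrow> orthogonal_matrix Q \<Longrightarrow> norm (H r Q) \<le> B"
    unfolding bounded_iff by force
  show ?thesis
  proof (rule integral_dominated_convergence[where w="\<lambda>_. B"])
    show "H t \<in> borel_measurable \<mu>" "H (s i) \<in> borel_measurable \<mu>" for i
      by (intro measurable_haar_continuous[OF haar] H_at)+
    show "AE Q in \<mu>. norm (H (s i) Q) \<le> B" for i
      using haar_orthogonalD(3)[OF haar] by eventually_elim (simp add: B)
    have "(\<lambda>i. (s i, Q)) \<longlonglongrightarrow> (t, Q)" for Q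
      by (intro tendsto_Pair s tendsto_const)
    then show "AE Q in \<mu>. (\<lambda>i. H (s i) Q) \<longlonglongrightarrow> H t Q"
      using continuous_on_tendsto_compose[OF H] by (intro AE_I2) force
  qed simp
qed

lemma haar_integral_derivative_eq_0:
  fixes \<Phi> :: "real^'n^'n \<Rightarrow> 'b::{banach,second_countable_topology}"
    and H :: "real \<Rightarrow> real^'n^'n \<Rightarrow> 'b"
  assumes haar: "haar_orthogonal \<mu>" and U: "\<And>t. orthogonal_matrix (U t)"
    and \<Phi>: "continuous_on UNIV \<Phi>" and H: "continuous_on UNIV (\<lambda>p. H (fst p) (snd p))"
    and quotient: "\<And>t Q. \<Phi> (U t ** Q) - \<Phi> Q = t *\<^sub>R H t Q"
  shows "(\<integral>Q. H 0 Q \<partial>\<mu>) = 0"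
proof -
  have "(\<integral>Q. H t Q \<partial>\<mu>) = 0" if "t \<noteq> 0" for t
  proof -
    have \<Phi>U: "continuous_on UNIV (\<lambda>Q. \<Phi> (U t ** Q))"
      by (intro continuous_on_compose2[OF \<Phi>] continuous_intros) auto
    have "(\<integral>Q. H t Q \<partial>\<mu>) = (\<integral>Q. (1 / t) *\<^sub>R (\<Phi> (U t ** Q) - \<Phi> Q) \<partial>\<mu>)"
      using that by (simp add: quotient)
    also have "\<dots> = (1 / t) *\<^sub>R ((\<integral>Q. \<Phi> (U t ** Q) \<partial>\<mu>) - (\<integral>Q. \<Phi> Q \<partial>\<mu>))"
      using integrable_haar_continuous[OF haar \<Phi>] integrable_haar_continuous[OF haar \<Phi>U] by simp
    finally show ?thesis
      by (simp add: haar_integral_left_mult[OF haar \<Phi> U])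
  qed
  then have "(\<lambda>i. \<integral>Q. H (inverse (Suc i)) Q \<partial>\<mu>) = (\<lambda>i. 0)"
    by simp
  moreover have "(\<lambda>i. \<integral>Q. H (inverse (Suc i)) Q \<partial>\<mu>) \<longlonglongrightarrow> (\<integral>Q. H 0 Q \<partial>\<mu>)"
    by (intro tendsto_haar_integral_param[OF haar H] LIMSEQ_inverse_real_of_nat)
  ultimately show ?thesis
    using LIMSEQ_unique tendsto_const by metis
qed

lemma orthogonal_matrix_quadratic:
  fixes A :: "real^'n^'n"
  assumes skew: "transpose A = - A" and cube: "A ** A ** A = - A" and pq: "p\<^sup>2 + q\<^sup>2 = 2 * q"
  shows "orthogonal_matrix (mat 1 + p *\<^sub>R A + q *\<^sub>R (A ** A))"
proof -
  have A3: "A ** (A ** A) = - A"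
    using cube by (simp add: matrix_mul_assoc)
  have A4: "A ** A ** (A ** A) = - (A ** A)"
    using cube by (simp add: matrix_mul_assoc matrix_neg_left)
  have "transpose (mat 1 + p *\<^sub>R A + q *\<^sub>R (A ** A)) = mat 1 - p *\<^sub>R A + q *\<^sub>R (A ** A)"
    by (simp add: transpose_add transpose_scalar matrix_transpose_mul skew matrix_neg_left
        matrix_neg_right)
  moreover have "(mat 1 - p *\<^sub>R A + q *\<^sub>R (A ** A)) ** (mat 1 + p *\<^sub>R A + q *\<^sub>R (A ** A))
      = mat 1 + (2 * q - p\<^sup>2 - q\<^sup>2) *\<^sub>R (A ** A)"
    by (simp add: matrix_add_ldistrib matrix_add_rdistrib matrix_diff_rdistrib matrix_scalar_ac
        A3 A4 cube matrix_neg_right flip: scalar_matrix_assoc)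
       (simp add: vec_eq_iff algebra_simps power2_eq_square)
  ultimately show ?thesis
    using pq by (simp add: orthogonal_matrix)
qed

lemma one_plus_power2_neq_0 [simp]: "1 + t\<^sup>2 \<noteq> (0::real)"
  using zero_le_power2[of t] by linarith

text \<open>For a skew matrix with \<open>A\<^sup>3 = -A\<close>, \<open>exp (\<theta> A) = I + sin \<theta> A + (1 - cos \<theta>) A\<^sup>2\<close>;
  substituting \<open>t = tan (\<theta>/2)\<close> gives the rational curve below.\<close>
definition rotation_velocity :: "real^'n^'n \<Rightarrow> real \<Rightarrow> real^'n^'n" where
  "rotation_velocity A t = (2 / (1 + t\<^sup>2)) *\<^sub>R (A + t *\<^sub>R (A ** A))"

definition rotation_curve :: "real^'n^'n \<Rightarrow> real \<Rightarrow> real^'n^'n" where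
  "rotation_curve A t = mat 1 + t *\<^sub>R rotation_velocity A t"

lemma orthogonal_rotation_curve:
  assumes "transpose A = - A" and "A ** A ** A = - A"
  shows "orthogonal_matrix (rotation_curve A t)"
proof -
  have "rotation_curve A t = mat 1 + (2 * t / (1 + t\<^sup>2)) *\<^sub>R A + (2 * t\<^sup>2 / (1 + t\<^sup>2)) *\<^sub>R (A ** A)"
    by (simp add: rotation_curve_def rotation_velocity_def scaleR_add_right power2_eq_square mult_ac)
  moreover have "(2 * t / (1 + t\<^sup>2))\<^sup>2 + (2 * t\<^sup>2 / (1 + t\<^sup>2))\<^sup>2 = 2 * (2 * t\<^sup>2 / (1 + t\<^sup>2))"
    by (simp add: field_simps) algebra
  ultimately show ?thesis
    using orthogonal_matrix_quadratic[OF assms] by simp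
qed

lemma continuous_on_rotation_velocity [continuous_intros]:
  assumes "continuous_on S f"
  shows "continuous_on S (\<lambda>x. rotation_velocity A (f x))"
  unfolding rotation_velocity_def
  by (intro continuous_intros assms ballI one_plus_power2_neq_0)

lemma congruence_mat_1_plus_scaleR:
  fixes C Y :: "complex^'n^'n"
  shows "(mat 1 + t *\<^sub>R C) ** Y ** transpose (mat 1 + t *\<^sub>R C) - Y
    = t *\<^sub>R (C ** Y + Y ** transpose C + t *\<^sub>R (C ** Y ** transpose C))"
  by (simp add: transpose_add transpose_scalar matrix_add_ldistrib matrix_add_rdistrib
      matrix_scalar_ac scaleR_add_right flip: scalar_matrix_assoc)

lemma Xmat_left_mult_diff:
  assumes "cmat U = mat 1 + t *\<^sub>R C"
  shows "Xmat (U ** Q) M i - Xmat Q M i = t *\<^sub>R (if odd i then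
      C ** Xmat Q M i + Xmat Q M i ** transpose C + t *\<^sub>R (C ** Xmat Q M i ** transpose C) else 0)"
proof (cases "odd i")
  case True
  then have "Xmat (U ** Q) M i = cmat U ** Xmat Q M i ** transpose (cmat U)"
    by (simp add: Xmat_def cmat_mult matrix_transpose_mul matrix_mul_assoc)
  with True show ?thesis
    by (simp add: assms congruence_mat_1_plus_scaleR)
qed (simp add: Xmat_def)

lemma haar_orthogonal_schwinger_dyson:
  fixes A :: "real^'n^'n" and \<mu> :: "(real^'n^'n) measure"
  assumes haar: "haar_orthogonal \<mu>" and skew: "transpose A = - A" and cube: "A ** A ** A = - A"
  shows "(\<integral>Q. (\<Sum>i\<in>{i\<in>{1..n}. odd i}. mprod (Xmat Q M) 1 (i - 1)
      ** (cmat A ** Xmat Q M i - Xmat Q M i ** cmat A) ** mprod (Xmat Q M) (Suc i) n) \<partial>\<mu>) = 0"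
proof -
  define C where "C t = cmat (rotation_velocity A t)" for t
  define K where "K t Q i = (if odd i then C t ** Xmat Q M i + Xmat Q M i ** transpose (C t)
    + t *\<^sub>R (C t ** Xmat Q M i ** transpose (C t)) else 0)" for t Q i
  define H where "H t Q = (\<Sum>i=1..n. mprod (Xmat (rotation_curve A t ** Q) M) 1 (i - 1)
    ** K t Q i ** mprod (Xmat Q M) (Suc i) n)" for t Q
  have "(\<integral>Q. H 0 Q \<partial>\<mu>) = 0"
  proof (rule haar_integral_derivative_eq_0[OF haar])
    show "orthogonal_matrix (rotation_curve A t)" for t
      by (rule orthogonal_rotation_curve[OF skew cube])
    show "continuous_on UNIV (\<lambda>Q. mprod (Xmat Q M) 1 n)"
      by (intro continuous_intros)
    have "continuous_on UNIV (\<lambda>p. K (fst p) (snd p) i)" for i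
      unfolding K_def C_def by (cases "odd i") (simp_all, intro continuous_intros)
    then show "continuous_on UNIV (\<lambda>p. H (fst p) (snd p))"
      unfolding H_def rotation_curve_def by (intro continuous_intros)
    show "mprod (Xmat (rotation_curve A t ** Q) M) 1 n - mprod (Xmat Q M) 1 n = t *\<^sub>R H t Q" for t Q
    proof -
      have "Xmat (rotation_curve A t ** Q) M i - Xmat Q M i = t *\<^sub>R K t Q i" for i
        unfolding K_def C_def
        by (rule Xmat_left_mult_diff) (simp add: rotation_curve_def cmat_add cmat_scaleR cmat_mat)
      then show ?thesis
        unfolding mprod_telescope H_def
        by (simp add: scaleR_sum_right matrix_scalar_ac flip: scalar_matrix_assoc)
    qed
  qed
  moreover have "H 0 Q = 2 *\<^sub>R (\<Sum>i\<in>{i\<in>{1..n}. odd i}. mprod (Xmat Q M) 1 (i - 1)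
      ** (cmat A ** Xmat Q M i - Xmat Q M i ** cmat A) ** mprod (Xmat Q M) (Suc i) n)" for Q
  proof -
    have "transpose (cmat A) = - cmat A"
      by (simp add: skew cmat_uminus flip: cmat_transpose)
    then have K0: "K 0 Q i = (if odd i then 2 *\<^sub>R (cmat A ** Xmat Q M i - Xmat Q M i ** cmat A) else 0)"
      for i
      by (simp add: K_def C_def rotation_velocity_def cmat_scaleR transpose_scalar matrix_scalar_ac
          matrix_neg_right scaleR_diff_right flip: scalar_matrix_assoc)
    have "H 0 Q = (\<Sum>i=1..n. 2 *\<^sub>R (if odd i then mprod (Xmat Q M) 1 (i - 1)
      ** (cmat A ** Xmat Q M i - Xmat Q M i ** cmat A) ** mprod (Xmat Q M) (Suc i) n else 0))"
      unfolding H_def K0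
      by (intro sum.cong refl) (simp add: rotation_curve_def matrix_scalar_ac flip: scalar_matrix_assoc)
    then show ?thesis
      by (simp only: scaleR_sum_right sum.inter_filter[OF finite_atLeastAtMost])
  qed
  ultimately show ?thesis
    by simp
qed

definition matrix_unit :: "'n \<Rightarrow> 'n \<Rightarrow> 'a::zero_neq_one^'n^'n" where
  "matrix_unit a b = (\<chi> i j. if i = a \<and> j = b then 1 else 0)"

lemma matrix_mult_matrix_unit_nth:
  "(P ** matrix_unit c d) $ i $ k = (if k = d then P $ i $ c else (0::'a::semiring_1))"
  by (cases "k = d")
    (simp_all add: matrix_unit_def matrix_matrix_mult_def if_distrib if_distribR sum.delta' cong: if_cong)

lemma matrix_unit_mult:
  "matrix_unit a b ** matrix_unit c d = (if b = c then matrix_unit a d else (0::'a::semiring_1^'n^'n))"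
  by (simp add: vec_eq_iff matrix_mult_matrix_unit_nth) (simp add: matrix_unit_def)

lemma transpose_matrix_unit: "transpose (matrix_unit a b) = matrix_unit b a"
  by (auto simp: matrix_unit_def transpose_def vec_eq_iff)

lemma cmat_matrix_unit: "cmat (matrix_unit a b) = matrix_unit a b"
  by (simp add: cmat_def matrix_unit_def vec_eq_iff)

lemma transpose_skew_matrix_unit:
  "transpose (matrix_unit a b - matrix_unit b a) = - (matrix_unit a b - matrix_unit b a :: 'a::ring_1^'n^'n)"
  by (simp add: transpose_diff transpose_matrix_unit)

lemma skew_matrix_unit_cube:
  "(matrix_unit a b - matrix_unit b a) ** (matrix_unit a b - matrix_unit b a)
    ** (matrix_unit a b - matrix_unit b a) = - (matrix_unit a b - matrix_unit b a :: 'a::ring_1^'n^'n)"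
  by (cases "a = b")
    (simp_all add: matrix_diff_ldistrib matrix_diff_rdistrib matrix_unit_mult matrix_neg_left)

lemma matrix_unit_sandwich_nth:
  "(P ** matrix_unit c d ** R) $ i $ j = P $ i $ c * (R $ d $ j :: 'a::semiring_1)"
  by (simp add: matrix_matrix_mult_def[of "P ** matrix_unit c d"] matrix_mult_matrix_unit_nth
      if_distrib if_distribR sum.delta cong: if_cong)

lemma sum_matrix_unit_sandwich_diag:
  "(\<Sum>a\<in>UNIV. \<Sum>b\<in>UNIV. (P ** matrix_unit a b ** R) $ a $ b) = trace P * (trace R :: 'a::comm_semiring_1)"
  by (simp add: matrix_unit_sandwich_nth trace_def sum_product)

lemma sum_matrix_unit_sandwich_transpose:
  "(\<Sum>a\<in>UNIV. \<Sum>b\<in>UNIV. (P ** matrix_unit b a ** R) $ a $ b) = trace (P ** transpose R :: 'a::comm_semiring_1^'n^'n)"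
  by (simp add: matrix_unit_sandwich_nth) (simp add: trace_def matrix_matrix_mult_def transpose_def)

lemma sum_skew_matrix_unit_commutator_nth:
  fixes P Y R :: "'a::comm_ring_1^'n^'n"
  shows "(\<Sum>a\<in>UNIV. \<Sum>b\<in>UNIV. (P ** ((matrix_unit a b - matrix_unit b a) ** Y
      - Y ** (matrix_unit a b - matrix_unit b a)) ** R) $ a $ b)
    = (trace P * trace (Y ** R) - trace (P ** transpose (Y ** R)))
      - (trace (P ** Y) * trace R - trace (P ** Y ** transpose R))"
proof -
  have "P ** ((matrix_unit a b - matrix_unit b a) ** Y - Y ** (matrix_unit a b - matrix_unit b a)) ** R
    = (P ** matrix_unit a b ** (Y ** R) - P ** matrix_unit b a ** (Y ** R))
      - ((P ** Y) ** matrix_unit a b ** R - (P ** Y) ** matrix_unit b a ** R)" for a b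
    by (simp add: matrix_diff_ldistrib matrix_diff_rdistrib matrix_mul_assoc)
  then show ?thesis
    by (simp only: vector_minus_component sum_subtractf sum_matrix_unit_sandwich_diag
        sum_matrix_unit_sandwich_transpose)
qed

definition trace_split_defect :: "(nat \<Rightarrow> complex^'n^'n) \<Rightarrow> nat \<Rightarrow> nat \<Rightarrow> complex" where
  "trace_split_defect X n j = trace (mprod X 1 j) * trace (mprod X (Suc j) n)
    - trace (mprod X 1 j ** transpose (mprod X (Suc j) n))"

lemma sum_skew_matrix_unit_commutator_mprod_nth:
  assumes "1 \<le> i" "i \<le> n"
  shows "(\<Sum>a\<in>UNIV. \<Sum>b\<in>UNIV. (mprod X 1 (i - 1) ** (cmat (matrix_unit a b - matrix_unit b a) ** X i
      - X i ** cmat (matrix_unit a b - matrix_unit b a)) ** mprod X (Suc i) n) $ a $ b)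
    = trace_split_defect X n (i - 1) - trace_split_defect X n i"
proof -
  have "X i ** mprod X (Suc i) n = mprod X i n"
    using assms by (simp add: mprod_Cons)
  moreover have "mprod X 1 (i - 1) ** X i = mprod X 1 i"
    using assms mprod_snoc[of 1 "i - 1" X] by simp
  ultimately show ?thesis
    using assms
    by (simp add: cmat_diff cmat_matrix_unit sum_skew_matrix_unit_commutator_nth trace_split_defect_def)
qed

lemma trace_split_defect_0:
  fixes X :: "nat \<Rightarrow> complex^'n^'n"
  shows "trace_split_defect X n 0 = (of_nat CARD('n) - 1) * trace (mprod X 1 n)"
  by (simp add: trace_split_defect_def mprod_eq_mat_1 trace_I trace_transpose algebra_simps)

lemma sum_odd_trace_split_defect_diff:
  fixes X :: "nat \<Rightarrow> complex^'n^'n"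
  assumes "even n" and "n \<ge> 2"
  shows "(\<Sum>i\<in>{i\<in>{1..n}. odd i}. trace_split_defect X n (i - 1) - trace_split_defect X n i)
    = (of_nat CARD('n) - 1) * trace (mprod X 1 n)
      + (\<Sum>k\<in>{k. 3 \<le> k \<and> k \<le> n - 1 \<and> odd k}. trace_split_defect X n (k - 1))
      - (\<Sum>k\<in>{k. 1 \<le> k \<and> k \<le> n - 1 \<and> odd k}. trace_split_defect X n k)"
proof -
  let ?S1 = "{k. 1 \<le> k \<and> k \<le> n - 1 \<and> odd k}" and ?S3 = "{k. 3 \<le> k \<and> k \<le> n - 1 \<and> odd k}"
  have "i \<le> n - 1" if "odd i" "i \<le> n" for i
    using that \<open>even n\<close> by (cases "i = n") auto
  then have "{i\<in>{1..n}. odd i} = ?S1"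
    by auto
  moreover have "?S1 = insert 1 ?S3"
    using assms by (auto elim: oddE)
  ultimately show ?thesis
    by (simp add: sum_subtractf trace_split_defect_0)
qed

lemma sum_skew_matrix_unit_commutators_nth:
  fixes X :: "nat \<Rightarrow> complex^'n^'n"
  assumes "even n" and "n \<ge> 2"
  shows "(\<Sum>a\<in>UNIV. \<Sum>b\<in>UNIV. (\<Sum>i\<in>{i\<in>{1..n}. odd i}. mprod X 1 (i - 1)
      ** (cmat (matrix_unit a b - matrix_unit b a) ** X i - X i ** cmat (matrix_unit a b - matrix_unit b a))
      ** mprod X (Suc i) n) $ a $ b)
    = (of_nat CARD('n) - 1) * trace (mprod X 1 n)
      + (\<Sum>k\<in>{k. 3 \<le> k \<and> k \<le> n - 1 \<and> odd k}. trace_split_defect X n (k - 1))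
      - (\<Sum>k\<in>{k. 1 \<le> k \<and> k \<le> n - 1 \<and> odd k}. trace_split_defect X n k)"
proof -
  have "(\<Sum>i\<in>{i\<in>{1..n}. odd i}. \<Sum>a\<in>UNIV. \<Sum>b\<in>UNIV. (mprod X 1 (i - 1)
      ** (cmat (matrix_unit a b - matrix_unit b a) ** X i - X i ** cmat (matrix_unit a b - matrix_unit b a))
      ** mprod X (Suc i) n) $ a $ b)
    = (\<Sum>i\<in>{i\<in>{1..n}. odd i}. trace_split_defect X n (i - 1) - trace_split_defect X n i)"
    by (intro sum.cong refl sum_skew_matrix_unit_commutator_mprod_nth) auto
  then show ?thesis
    unfolding sum_component sum.swap[where A = UNIV and B = "{i\<in>{1..n}. odd i}"]
      sum_odd_trace_split_defect_diff[OF assms] .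
qed

lemma haar_integral_trace_split_defects:
  fixes \<mu> :: "(real^'n^'n) measure" and M :: "nat \<Rightarrow> complex^'n^'n"
  assumes haar: "haar_orthogonal \<mu>" and "even n" and "n \<ge> 2"
  shows "(\<integral>Q. (of_nat CARD('n) - 1) * trace (mprod (Xmat Q M) 1 n)
      + (\<Sum>k\<in>{k. 3 \<le> k \<and> k \<le> n - 1 \<and> odd k}. trace_split_defect (Xmat Q M) n (k - 1))
      - (\<Sum>k\<in>{k. 1 \<le> k \<and> k \<le> n - 1 \<and> odd k}. trace_split_defect (Xmat Q M) n k) \<partial>\<mu>) = 0"
proof -
  define Z where "Z a b Q = (\<Sum>i\<in>{i\<in>{1..n}. odd i}. mprod (Xmat Q M) 1 (i - 1)
    ** (cmat (matrix_unit a b - matrix_unit b a) ** Xmat Q M i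
      - Xmat Q M i ** cmat (matrix_unit a b - matrix_unit b a)) ** mprod (Xmat Q M) (Suc i) n)"
    for a b Q
  have Z_integrable: "integrable \<mu> (Z a b)" for a b
    unfolding Z_def by (intro integrable_haar_continuous[OF haar] continuous_intros)
  have entry: "bounded_linear (\<lambda>X :: complex^'n^'n. X $ a $ b)" for a b
    by (intro bounded_linear_compose[OF bounded_linear_vec_nth bounded_linear_vec_nth])
  have "(\<integral>Q. Z a b Q \<partial>\<mu>) = 0" for a b
    unfolding Z_def
    by (rule haar_orthogonal_schwinger_dyson[OF haar transpose_skew_matrix_unit skew_matrix_unit_cube])
  then have "(\<integral>Q. Z a b Q $ a $ b \<partial>\<mu>) = 0" for a b
    by (simp add: integral_bounded_linear[OF entry Z_integrable])
  then have "(\<integral>Q. (\<Sum>a\<in>UNIV. \<Sum>b\<in>UNIV. Z a b Q $ a $ b) \<partial>\<mu>) = 0"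
    by (simp add: integrable_bounded_linear[OF entry Z_integrable])
  then show ?thesis
    unfolding Z_def sum_skew_matrix_unit_commutators_nth[OF assms(2,3)] .
qed

theorem proposition4p1:
  fixes \<mu> :: "(real^'n^'n) measure" and M :: "nat \<Rightarrow> complex^'n^'n" and n :: nat
  assumes "CARD('n) \<ge> 2"
    and "haar_orthogonal \<mu>"
    and "even n" and "n \<ge> 2"
  shows "(of_nat CARD('n) - 1) * (\<integral>Q. trace (mprod (Xmat Q M) 1 n) \<partial>\<mu>)
    = - (\<Sum>k\<in>{k. 1 \<le> k \<and> k \<le> n - 1 \<and> odd k}.
           \<integral>Q. trace (mprod (Xmat Q M) 1 k ** transpose (mprod (Xmat Q M) (k+1) n)) \<partial>\<mu>)
      + (\<Sum>k\<in>{k. 1 \<le> k \<and> k \<le> n - 1 \<and> odd k}.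
           \<integral>Q. trace (mprod (Xmat Q M) 1 k) * trace (mprod (Xmat Q M) (k+1) n) \<partial>\<mu>)
      + (\<Sum>k\<in>{k. 3 \<le> k \<and> k \<le> n - 1 \<and> odd k}.
           \<integral>Q. trace (mprod (Xmat Q M) 1 (k-1) ** transpose (mprod (Xmat Q M) k n)) \<partial>\<mu>)
      - (\<Sum>k\<in>{k. 3 \<le> k \<and> k \<le> n - 1 \<and> odd k}.
           \<integral>Q. trace (mprod (Xmat Q M) 1 (k-1)) * trace (mprod (Xmat Q M) k n) \<partial>\<mu>)"
proof -
  have integrable: "integrable \<mu> f" if "continuous_on UNIV f" for f :: "real^'n^'n \<Rightarrow> complex"
    by (rule integrable_haar_continuous[OF assms(2) that])
  have "integrable \<mu> (\<lambda>Q. trace (mprod (Xmat Q M) a b))"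
    and "integrable \<mu> (\<lambda>Q. trace (mprod (Xmat Q M) a b) * trace (mprod (Xmat Q M) c d))"
    and "integrable \<mu> (\<lambda>Q. trace (mprod (Xmat Q M) a b ** transpose (mprod (Xmat Q M) c d)))"
    for a b c d
    by (intro integrable continuous_intros)+
  with haar_integral_trace_split_defects[OF assms(2-4), of M] show ?thesis
    by (simp add: trace_split_defect_def sum_subtractf algebra_simps)
qed

end
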